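(* For all matroids $M$ and $N$ on disjoint finite sets, $$\mathrm{T}(M\mathbin{\Box} N)=\begin{cases} M\mathbin{\Box}\mathrm{T}N & \text{if } \rho(N)>0,\\ \mathrm{T}M\mathbin{\Box} N & \text{if } \rho(N)=0,\end{cases}\qquad \mathrm{L}(M\mathbin{\Box} N)=\begin{cases}\mathrm{L}M\mathbin{\Box} N & \text{if } \nu(M)>0,\\ M\mathbin{\Box}\mathrm{L}N & \text{if } \nu(M)=0.\end{cases}$$
   Context: For a matroid $M$ on $S$ write $\rho_M$ for rank, $\rho(M)=\rho_M(S)$, $\nu_M(A)=|A|-\rho_M(A)$, $\nu(M)=\nu_M(S)$, $\lambda_M(A)=\rho(M)-\rho_M(A)$. For matroids $M$ on $S$ and $N$ on $T$ with $S\cap T=\emptyset$, the free product $M\mathbin{\Box} N$ is the matroid on $S\cup T$ whose independent sets are those $A$ with $A\cap S$ independent in $M$ and $\lambda_M(A\cap S)\geq\nu_N(A\cap T)$. The truncation $\mathrm{T}M$ has as independent sets the independent sets $A$ of $M$ with $|A|\leq\max\{0,\rho(M)-1\}$; the Higgs lift $\mathrm{L}M$ has as independent sets the subsets $A$ of the ground set with $\nu_M(A)\leq 1$. *)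

theory Defs
  imports Main
begin

type_synonym 'a matroid = "'a set \<times> 'a set set"

definition ground :: "'a matroid \<Rightarrow> 'a set" where
  "ground M = fst M"

definition indeps :: "'a matroid \<Rightarrow> 'a set set" where
  "indeps M = snd M"

definition matroid :: "'a matroid \<Rightarrow> bool" where
  "matroid M \<longleftrightarrow> finite (ground M) \<and>
     (\<forall>A \<in> indeps M. A \<subseteq> ground M) \<and>
     {} \<in> indeps M \<and>
     (\<forall>A B. A \<in> indeps M \<and> B \<subseteq> A \<longrightarrow> B \<in> indeps M) \<and>
     (\<forall>A B. A \<in> indeps M \<and> B \<in> indeps M \<and> card A < card B \<longrightarrow>
        (\<exists>x \<in> B - A. insert x A \<in> indeps M))"

definition rk :: "'a matroid \<Rightarrow> 'a set \<Rightarrow> nat" where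
  "rk M A = Max (card ` {I. I \<in> indeps M \<and> I \<subseteq> A})"

definition rank :: "'a matroid \<Rightarrow> nat" where
  "rank M = rk M (ground M)"

definition nullity_set :: "'a matroid \<Rightarrow> 'a set \<Rightarrow> nat" where
  "nullity_set M A = card A - rk M A"

definition nullity :: "'a matroid \<Rightarrow> nat" where
  "nullity M = nullity_set M (ground M)"

definition corank_set :: "'a matroid \<Rightarrow> 'a set \<Rightarrow> nat" where
  "corank_set M A = rank M - rk M A"

definition free_product :: "'a matroid \<Rightarrow> 'a matroid \<Rightarrow> 'a matroid" where
  "free_product M N = (ground M \<union> ground N,
     {A. A \<subseteq> ground M \<union> ground N \<and> A \<inter> ground M \<in> indeps M \<and>
         corank_set M (A \<inter> ground M) \<ge> nullity_set N (A \<inter> ground N)})"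

definition truncation :: "'a matroid \<Rightarrow> 'a matroid" where
  "truncation M = (ground M,
     {A. A \<in> indeps M \<and> int (card A) \<le> max 0 (int (rank M) - 1)})"

definition higgs_lift :: "'a matroid \<Rightarrow> 'a matroid" where
  "higgs_lift M = (ground M, {A. A \<subseteq> ground M \<and> nullity_set M A \<le> 1})"

end

theory Submission
  imports Defs
begin

text \<open>The free product has rank function
  \<open>r(A) = min (r\<^sub>M(A \<inter> S) + |A \<inter> T|) (r(M) + r\<^sub>N(A \<inter> T))\<close>, so
  \<open>r(M \<box> N) = r(M) + r(N)\<close> and the nullity of \<open>A\<close> in \<open>M \<box> N\<close> is
  \<open>max \<nu>\<^sub>M(A \<inter> S) (|A \<inter> S| + \<nu>\<^sub>N(A \<inter> T) - r(M))\<close>.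
  Truncation caps every rank at \<open>r - 1\<close>, and the Higgs lift lowers every nullity by one
  (raising the rank by one when \<open>\<nu> > 0\<close>). Substituting these formulas into the defining
  inequality \<open>|A \<inter> S| + \<nu>\<^sub>N(A \<inter> T) \<le> r(M)\<close> of the free product, both sides of each
  identity describe the same linear constraints on \<open>|A \<inter> S|\<close>, \<open>|A \<inter> T|\<close> and the ranks.\<close>

definition finite_set_system :: "'a matroid \<Rightarrow> bool" where
  "finite_set_system M \<longleftrightarrow>
     finite (ground M) \<and> (\<forall>A\<in>indeps M. A \<subseteq> ground M) \<and> {} \<in> indeps M"

lemma matroid_imp_finite_set_system: "matroid M \<Longrightarrow> finite_set_system M"
  unfolding matroid_def finite_set_system_def by blast

lemma matroid_indep_subset: "matroid M \<Longrightarrow> I \<in> indeps M \<Longrightarrow> J \<subseteq> I \<Longrightarrow> J \<in> indeps M"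
  unfolding matroid_def by blast

lemma matroid_eqI: "ground M = ground N \<Longrightarrow> (\<And>A. A \<in> indeps M \<longleftrightarrow> A \<in> indeps N) \<Longrightarrow> M = N"
  unfolding ground_def indeps_def by (simp add: prod_eq_iff set_eq_iff)

lemma card_split_disjoint:
  assumes "finite S" "finite T" "S \<inter> T = {}" "A \<subseteq> S \<union> T"
  shows "card A = card (A \<inter> S) + card (A \<inter> T)"
proof -
  have "A = (A \<inter> S) \<union> (A \<inter> T)" using assms(4) by auto
  then show ?thesis
    using assms(1-3) by (metis card_Un_disjoint finite_Int inf_commute Int_assoc Int_empty_right)
qed

context
  fixes M :: "'a matroid"
  assumes M: "finite_set_system M"
begin

lemma indep_subset_ground: "I \<in> indeps M \<Longrightarrow> I \<subseteq> ground M"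
  using M unfolding finite_set_system_def by blast

lemma finite_indep: "I \<in> indeps M \<Longrightarrow> finite I"
  using M unfolding finite_set_system_def by (meson finite_subset)

lemma finite_card_indeps_subset: "finite (card ` {I \<in> indeps M. I \<subseteq> X})"
proof -
  have "{I \<in> indeps M. I \<subseteq> X} \<subseteq> Pow (ground M)" using indep_subset_ground by auto
  then show ?thesis
    using M unfolding finite_set_system_def by (meson finite_Pow_iff finite_imageI finite_subset)
qed

lemma card_indep_le_rk: "I \<in> indeps M \<Longrightarrow> I \<subseteq> X \<Longrightarrow> card I \<le> rk M X"
  unfolding rk_def using finite_card_indeps_subset by (intro Max_ge) auto

lemma obtain_indep_card_rk:
  obtains I where "I \<in> indeps M" "I \<subseteq> X" "card I = rk M X"
proof -
  have "card ` {I \<in> indeps M. I \<subseteq> X} \<noteq> {}" using M unfolding finite_set_system_def by blast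
  then have "rk M X \<in> card ` {I \<in> indeps M. I \<subseteq> X}"
    unfolding rk_def using finite_card_indeps_subset by (intro Max_in)
  then show ?thesis using that by auto
qed

lemma rk_le_card: "finite X \<Longrightarrow> rk M X \<le> card X"
  by (metis card_mono obtain_indep_card_rk)

lemma rk_mono: "X \<subseteq> Y \<Longrightarrow> rk M X \<le> rk M Y"
  by (metis card_indep_le_rk obtain_indep_card_rk order_trans)

lemma rk_le_rank: "rk M X \<le> rank M"
  unfolding rank_def by (metis card_indep_le_rk indep_subset_ground obtain_indep_card_rk)

lemma card_indep_le_rank: "I \<in> indeps M \<Longrightarrow> card I \<le> rank M"
  unfolding rank_def by (simp add: card_indep_le_rk indep_subset_ground)

lemma rk_indep: "I \<in> indeps M \<Longrightarrow> rk M I = card I"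
  by (simp add: card_indep_le_rk finite_indep le_antisym rk_le_card)

lemma ground_indep_if_nullity_zero:
  assumes "nullity M = 0" shows "ground M \<in> indeps M"
proof -
  obtain B where B: "B \<in> indeps M" "B \<subseteq> ground M" "card B = rank M"
    using obtain_indep_card_rk unfolding rank_def by metis
  have "card (ground M) \<le> card B" using assms B(3) unfolding nullity_def nullity_set_def rank_def by simp
  then have "B = ground M" using M B(2) unfolding finite_set_system_def by (metis card_seteq)
  then show ?thesis using B(1) by simp
qed

end

lemma ground_free_product [simp]: "ground (free_product M N) = ground M \<union> ground N"
  by (simp add: free_product_def ground_def)

lemma indeps_free_product_iff:
  assumes "finite_set_system M"
  shows "A \<in> indeps (free_product M N) \<longleftrightarrow>
    A \<subseteq> ground M \<union> ground N \<and> A \<inter> ground M \<in> indeps M \<and>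
    card (A \<inter> ground M) + nullity_set N (A \<inter> ground N) \<le> rank M"
proof -
  have "corank_set M (A \<inter> ground M) \<ge> nullity_set N (A \<inter> ground N) \<longleftrightarrow>
     card (A \<inter> ground M) + nullity_set N (A \<inter> ground N) \<le> rank M"
    if "A \<inter> ground M \<in> indeps M"
    using that rk_indep[OF assms] card_indep_le_rank[OF assms] unfolding corank_set_def by fastforce
  then show ?thesis unfolding free_product_def indeps_def ground_def by auto
qed

lemma finite_set_system_free_product:
  assumes "finite_set_system M" "finite_set_system N"
  shows "finite_set_system (free_product M N)"
  using assms indeps_free_product_iff[OF assms(1)]
  unfolding finite_set_system_def by (auto simp: nullity_set_def)

context
  fixes M N :: "'a matroid"
  assumes M: "finite_set_system M" and N: "finite_set_system N"
    and disjoint: "ground M \<inter> ground N = {}"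
begin

lemma card_split_ground:
  "A \<subseteq> ground M \<union> ground N \<Longrightarrow> card A = card (A \<inter> ground M) + card (A \<inter> ground N)"
  using M N disjoint by (intro card_split_disjoint) (auto simp: finite_set_system_def)

lemma rk_free_product_le:
  assumes "A \<subseteq> ground M \<union> ground N"
  shows "rk (free_product M N) A \<le>
     min (rk M (A \<inter> ground M) + card (A \<inter> ground N)) (rank M + rk N (A \<inter> ground N))"
proof -
  obtain I where I: "I \<in> indeps (free_product M N)" "I \<subseteq> A" "card I = rk (free_product M N) A"
    using obtain_indep_card_rk[OF finite_set_system_free_product[OF M N]] by metis
  have IM: "I \<inter> ground M \<in> indeps M"
    and I_bound: "card (I \<inter> ground M) + nullity_set N (I \<inter> ground N) \<le> rank M"
    using I(1) unfolding indeps_free_product_iff[OF M] by blast+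
  have finT: "finite (ground N)" using N unfolding finite_set_system_def by blast
  have "card I = card (I \<inter> ground M) + card (I \<inter> ground N)"
    using I(2) assms card_split_ground by blast
  moreover have "card (I \<inter> ground M) \<le> rk M (A \<inter> ground M)"
    using I(2) by (intro card_indep_le_rk[OF M IM]) blast
  moreover have "card (I \<inter> ground N) \<le> card (A \<inter> ground N)"
    using I(2) finT by (intro card_mono) auto
  moreover have "rk N (I \<inter> ground N) \<le> rk N (A \<inter> ground N)"
    using I(2) by (intro rk_mono[OF N]) blast
  moreover have "rk N (I \<inter> ground N) \<le> card (I \<inter> ground N)"
    using finT by (intro rk_le_card[OF N]) simp
  ultimately show ?thesis using I(3) I_bound unfolding nullity_set_def by linarith
qed

text \<open>A basis of \<open>A \<inter> ground M\<close>, a basis of \<open>A \<inter> ground N\<close> and as many further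
  elements of \<open>A \<inter> ground N\<close> as the slack \<open>rank M - rk M (A \<inter> ground M)\<close> allows
  form an independent set of the required size.\<close>

lemma rk_free_product_ge:
  assumes "A \<subseteq> ground M \<union> ground N"
  shows "min (rk M (A \<inter> ground M) + card (A \<inter> ground N)) (rank M + rk N (A \<inter> ground N))
      \<le> rk (free_product M N) A"
proof -
  define AM AN where "AM = A \<inter> ground M" and "AN = A \<inter> ground N"
  obtain BM where BM: "BM \<in> indeps M" "BM \<subseteq> AM" "card BM = rk M AM"
    by (rule obtain_indep_card_rk[OF M])
  obtain BN where BN: "BN \<in> indeps N" "BN \<subseteq> AN" "card BN = rk N AN"
    by (rule obtain_indep_card_rk[OF N])
  have finAN: "finite AN" using N unfolding AN_def finite_set_system_def by blast
  have finBN: "finite BN" using finAN BN(2) finite_subset by blast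
  define m where "m = min (rank M - rk M AM) (card AN - rk N AN)"
  have "card (AN - BN) = card AN - rk N AN" using BN finBN by (simp add: card_Diff_subset)
  then obtain E where E: "E \<subseteq> AN - BN" "card E = m" "finite E"
    by (metis m_def min.cobounded2 obtain_subset_with_card_n)
  have card_BN_E: "card (BN \<union> E) = rk N AN + m"
    using E BN(3) finBN by (subst card_Un_disjoint) auto
  define I where "I = BM \<union> BN \<union> E"
  have I_A: "I \<subseteq> A" and IM: "I \<inter> ground M = BM" and IN: "I \<inter> ground N = BN \<union> E"
    using BM(2) BN(2) E(1) disjoint unfolding I_def AM_def AN_def by auto
  have "card BN \<le> rk N (BN \<union> E)" using BN(1) by (intro card_indep_le_rk[OF N]) auto
  then have "card BM + nullity_set N (BN \<union> E) \<le> rank M"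
    using BM(3) BN(3) card_BN_E rk_le_rank[OF M, of AM] unfolding nullity_set_def m_def by linarith
  then have "I \<in> indeps (free_product M N)"
    using I_A assms BM(1) IM IN unfolding indeps_free_product_iff[OF M] by auto
  then have "card I \<le> rk (free_product M N) A"
    using I_A by (rule card_indep_le_rk[OF finite_set_system_free_product[OF M N]])
  moreover have "card I = rk M AM + rk N AN + m"
    using card_split_ground[of I] I_A assms IM IN BM(3) card_BN_E by auto
  moreover have "rk N AN \<le> card AN" "rk M AM \<le> rank M"
    using rk_le_card[OF N finAN] rk_le_rank[OF M] .
  ultimately show ?thesis unfolding AM_def AN_def m_def by linarith
qed

lemma rk_free_product:
  "A \<subseteq> ground M \<union> ground N \<Longrightarrow> rk (free_product M N) A =
     min (rk M (A \<inter> ground M) + card (A \<inter> ground N)) (rank M + rk N (A \<inter> ground N))"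
  using rk_free_product_ge rk_free_product_le by (rule antisym[rotated])

lemma rank_free_product: "rank (free_product M N) = rank M + rank N"
proof -
  have "rk N (ground N) \<le> card (ground N)"
    using N by (intro rk_le_card) (simp_all add: finite_set_system_def)
  then show ?thesis
    using rk_free_product[of "ground M \<union> ground N"] disjoint
    unfolding rank_def by (simp add: Int_absorb1 Int_absorb2 Int_commute Un_Int_distrib2)
qed

lemma nullity_set_free_product:
  assumes "A \<subseteq> ground M \<union> ground N"
  shows "nullity_set (free_product M N) A =
    max (nullity_set M (A \<inter> ground M))
        (card (A \<inter> ground M) + nullity_set N (A \<inter> ground N) - rank M)"
proof -
  have "rk N (A \<inter> ground N) \<le> card (A \<inter> ground N)"
    using N by (intro rk_le_card) (simp_all add: finite_set_system_def)
  then show ?thesis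
    using rk_free_product[OF assms] card_split_ground[OF assms] unfolding nullity_set_def by linarith
qed

end

lemma ground_truncation [simp]: "ground (truncation M) = ground M"
  by (simp add: truncation_def ground_def)

lemma indeps_truncation_iff:
  "A \<in> indeps (truncation M) \<longleftrightarrow> A \<in> indeps M \<and> card A \<le> rank M - 1"
  by (auto simp: truncation_def indeps_def)

lemma finite_set_system_truncation: "finite_set_system M \<Longrightarrow> finite_set_system (truncation M)"
  unfolding finite_set_system_def by (simp add: indeps_truncation_iff)

lemma rk_truncation:
  assumes "matroid M" shows "rk (truncation M) X = min (rk M X) (rank M - 1)"
proof (rule antisym)
  have M: "finite_set_system M" using assms by (rule matroid_imp_finite_set_system)
  obtain J where "J \<in> indeps (truncation M)" "J \<subseteq> X" "card J = rk (truncation M) X"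
    using obtain_indep_card_rk[OF finite_set_system_truncation[OF M]] by metis
  then show "rk (truncation M) X \<le> min (rk M X) (rank M - 1)"
    using card_indep_le_rk[OF M] unfolding indeps_truncation_iff by fastforce
  obtain I where I: "I \<in> indeps M" "I \<subseteq> X" "card I = rk M X"
    using obtain_indep_card_rk[OF M] by metis
  obtain J where J: "J \<subseteq> I" "card J = min (rk M X) (rank M - 1)"
    using obtain_subset_with_card_n[of "min (rk M X) (rank M - 1)" I] I(3) by (metis min.cobounded1)
  have "J \<in> indeps (truncation M)"
    using matroid_indep_subset[OF assms I(1) J(1)] J(2) unfolding indeps_truncation_iff by simp
  then show "min (rk M X) (rank M - 1) \<le> rk (truncation M) X"
    using card_indep_le_rk[OF finite_set_system_truncation[OF M]] I(2) J by (metis order_trans)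
qed

lemma rank_truncation: "matroid M \<Longrightarrow> rank (truncation M) = rank M - 1"
  using rk_truncation[of M "ground M"] by (simp add: rank_def)

lemma nullity_set_truncation:
  "matroid M \<Longrightarrow> nullity_set (truncation M) X = max (nullity_set M X) (card X - (rank M - 1))"
  unfolding nullity_set_def by (simp add: rk_truncation)

lemma ground_higgs_lift [simp]: "ground (higgs_lift M) = ground M"
  by (simp add: higgs_lift_def ground_def)

lemma indeps_higgs_lift_iff:
  "A \<in> indeps (higgs_lift M) \<longleftrightarrow> A \<subseteq> ground M \<and> nullity_set M A \<le> 1"
  by (simp add: higgs_lift_def indeps_def)

lemma finite_set_system_higgs_lift: "finite_set_system M \<Longrightarrow> finite_set_system (higgs_lift M)"
  unfolding finite_set_system_def by (simp add: indeps_higgs_lift_iff nullity_set_def)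

lemma rk_higgs_lift:
  assumes M: "finite_set_system M" and "X \<subseteq> ground M"
  shows "rk (higgs_lift M) X = min (rk M X + 1) (card X)"
proof (rule antisym)
  have finX: "finite X" using M assms(2) finite_subset unfolding finite_set_system_def by blast
  obtain J where J: "J \<in> indeps (higgs_lift M)" "J \<subseteq> X" "card J = rk (higgs_lift M) X"
    using obtain_indep_card_rk[OF finite_set_system_higgs_lift[OF M]] by metis
  have "rk M J \<le> rk M X" using rk_mono[OF M J(2)] .
  moreover have "card J \<le> card X" using J(2) finX card_mono by blast
  ultimately show "rk (higgs_lift M) X \<le> min (rk M X + 1) (card X)"
    using J unfolding indeps_higgs_lift_iff nullity_set_def by auto
  obtain B where B: "B \<in> indeps M" "B \<subseteq> X" "card B = rk M X"
    using obtain_indep_card_rk[OF M] by metis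
  show "min (rk M X + 1) (card X) \<le> rk (higgs_lift M) X"
  proof (cases "B = X")
    case True
    then have "X \<in> indeps (higgs_lift M)"
      using B assms(2) unfolding indeps_higgs_lift_iff nullity_set_def by auto
    then show ?thesis using card_indep_le_rk[OF finite_set_system_higgs_lift[OF M]] by fastforce
  next
    case False
    then obtain x where x: "x \<in> X" "x \<notin> B" using B(2) by blast
    have card_xB: "card (insert x B) = rk M X + 1"
      using x B finite_subset[OF B(2) finX] by simp
    have "card B \<le> rk M (insert x B)" using card_indep_le_rk[OF M B(1)] by blast
    then have "insert x B \<in> indeps (higgs_lift M)"
      using card_xB B x assms(2) unfolding indeps_higgs_lift_iff nullity_set_def by auto
    then have "card (insert x B) \<le> rk (higgs_lift M) X"
      using card_indep_le_rk[OF finite_set_system_higgs_lift[OF M]] x B(2) by blast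
    then show ?thesis using card_xB by linarith
  qed
qed

lemma rank_higgs_lift:
  "finite_set_system M \<Longrightarrow> nullity M > 0 \<Longrightarrow> rank (higgs_lift M) = rank M + 1"
  unfolding rank_def nullity_def nullity_set_def by (simp add: rk_higgs_lift)

lemma nullity_set_higgs_lift:
  "finite_set_system M \<Longrightarrow> X \<subseteq> ground M \<Longrightarrow> nullity_set (higgs_lift M) X = nullity_set M X - 1"
  unfolding nullity_set_def by (simp add: rk_higgs_lift)

context
  fixes M N :: "'a matroid"
  assumes matroid_M: "matroid M" and matroid_N: "matroid N"
    and disjoint: "ground M \<inter> ground N = {}"
begin

private lemma M: "finite_set_system M" and N: "finite_set_system N"
  using matroid_M matroid_N by (simp_all add: matroid_imp_finite_set_system)

lemma truncation_free_product_if_rank_pos: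
  assumes "rank N > 0"
  shows "truncation (free_product M N) = free_product M (truncation N)"
proof (rule matroid_eqI)
  fix A
  show "A \<in> indeps (truncation (free_product M N)) \<longleftrightarrow> A \<in> indeps (free_product M (truncation N))"
  proof (cases "A \<subseteq> ground M \<union> ground N")
    case True
    then show ?thesis
      unfolding indeps_truncation_iff indeps_free_product_iff[OF M] nullity_set_truncation[OF matroid_N]
        rank_free_product[OF M N disjoint] card_split_ground[OF M N disjoint True]
      using assms by auto
  qed (simp add: indeps_truncation_iff indeps_free_product_iff[OF M])
qed simp

lemma truncation_free_product_if_rank_zero:
  assumes "rank N = 0"
  shows "truncation (free_product M N) = free_product (truncation M) N"
proof (rule matroid_eqI)
  fix A
  show "A \<in> indeps (truncation (free_product M N)) \<longleftrightarrow> A \<in> indeps (free_product (truncation M) N)"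
  proof (cases "A \<subseteq> ground M \<union> ground N")
    case True
    have "nullity_set N (A \<inter> ground N) = card (A \<inter> ground N)"
      using rk_le_rank[OF N] assms unfolding nullity_set_def by (metis le_zero_eq minus_nat.diff_0)
    then show ?thesis
      unfolding indeps_truncation_iff indeps_free_product_iff[OF M]
        indeps_free_product_iff[OF finite_set_system_truncation[OF M]]
        rank_free_product[OF M N disjoint] rank_truncation[OF matroid_M]
        card_split_ground[OF M N disjoint True]
      using assms by auto
  qed (simp add: indeps_truncation_iff indeps_free_product_iff[OF M]
      indeps_free_product_iff[OF finite_set_system_truncation[OF M]])
qed simp

lemma higgs_lift_free_product_if_nullity_pos:
  assumes "nullity M > 0"
  shows "higgs_lift (free_product M N) = free_product (higgs_lift M) N"
proof (rule matroid_eqI)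
  fix A
  show "A \<in> indeps (higgs_lift (free_product M N)) \<longleftrightarrow> A \<in> indeps (free_product (higgs_lift M) N)"
  proof (cases "A \<subseteq> ground M \<union> ground N")
    case True
    then show ?thesis
      unfolding indeps_higgs_lift_iff indeps_free_product_iff[OF finite_set_system_higgs_lift[OF M]]
        nullity_set_free_product[OF M N disjoint True] rank_higgs_lift[OF M assms]
      by auto
  qed (simp add: indeps_higgs_lift_iff indeps_free_product_iff[OF finite_set_system_higgs_lift[OF M]])
qed simp

lemma higgs_lift_free_product_if_nullity_zero:
  assumes "nullity M = 0"
  shows "higgs_lift (free_product M N) = free_product M (higgs_lift N)"
proof (rule matroid_eqI)
  fix A
  show "A \<in> indeps (higgs_lift (free_product M N)) \<longleftrightarrow> A \<in> indeps (free_product M (higgs_lift N))"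
  proof (cases "A \<subseteq> ground M \<union> ground N")
    case True
    have "A \<inter> ground M \<in> indeps M"
      using matroid_indep_subset[OF matroid_M ground_indep_if_nullity_zero[OF M assms]] by blast
    then have "nullity_set M (A \<inter> ground M) = 0" "card (A \<inter> ground M) \<le> rank M"
      using rk_indep[OF M] card_indep_le_rank[OF M] unfolding nullity_set_def by auto
    moreover have "nullity_set (higgs_lift N) (A \<inter> ground N) = nullity_set N (A \<inter> ground N) - 1"
      using nullity_set_higgs_lift[OF N] by blast
    ultimately show ?thesis
      unfolding indeps_higgs_lift_iff indeps_free_product_iff[OF M]
        nullity_set_free_product[OF M N disjoint True]
      using \<open>A \<inter> ground M \<in> indeps M\<close> True by auto
  qed (simp add: indeps_higgs_lift_iff indeps_free_product_iff[OF M])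
qed simp

end

theorem proposition5p4:
  fixes M N :: "'a matroid"
  assumes "matroid M" and "matroid N"
    and "ground M \<inter> ground N = {}"
  shows "(truncation (free_product M N) =
           (if rank N > 0 then free_product M (truncation N)
            else free_product (truncation M) N)) \<and>
         (higgs_lift (free_product M N) =
           (if nullity M > 0 then free_product (higgs_lift M) N
            else free_product M (higgs_lift N)))"
  using truncation_free_product_if_rank_pos[OF assms] truncation_free_product_if_rank_zero[OF assms]
    higgs_lift_free_product_if_nullity_pos[OF assms] higgs_lift_free_product_if_nullity_zero[OF assms]
  by simp

end
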